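(* Let $d>0$, let $J$ satisfy (J) and $\int_{-\infty}^0\int_0^{+\infty}J(x-y)\,dy\,dx<+\infty$, but suppose there is no $\lambda>0$ with $\int_{\mathbb{R}}J(x)e^{\lambda x}dx<\infty$; let $f$ satisfy (f3). For each $\mu>0$ let $(c_\mu,\phi_\mu)$ be the unique pair with $c_\mu>0$ and $\phi_\mu\in C^1((-\infty,0])$ nonnegative and nonincreasing such that $$d\int_{-\infty}^0J(x-y)\phi_\mu(y)dy-d\phi_\mu(x)+c_\mu\phi_\mu'(x)+f(\phi_\mu(x))=0\ (x<0),\ \phi_\mu(-\infty)=1,\ \phi_\mu(0)=0,\ c_\mu=\mu\int_{-\infty}^0\int_0^{+\infty}J(x-y)\phi_\mu(x)dydx.$$ Then $c_\mu\to+\infty$ as $\mu\to+\infty$.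
   Context: Condition (J): $J\in C(\mathbb{R})\cap L^\infty(\mathbb{R})$, $J\ge 0$, $J(0)>0$, $\int_{\mathbb{R}}J=1$, $J$ even. Condition (f3): $f\in C^1([0,\infty))$, $f(0)=f(1)=0$, $f>0$ in $(0,1)$, $f'(0)>0>f'(1)$, $f(u)/u$ nonincreasing in $u>0$. Under these assumptions the pair $(c_\mu,\phi_\mu)$ exists and is unique for each $\mu>0$. *)

theory Defs
  imports "HOL-Analysis.Analysis"
begin

end

theory Submission
  imports Defs
begin

text \<open>
  Suppose \<open>c \<mu>\<close> stays below some \<open>C\<close> along a sequence \<open>\<mu> \<rightarrow> \<infinity>\<close>. The free boundary
  condition says \<open>c \<mu> = \<mu> * flux J (\<phi> \<mu>)\<close>, so the flux of \<open>\<phi> \<mu>\<close> across \<open>0\<close> tends to \<open>0\<close>.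
  Integrating the equation over \<open>[x1, 0]\<close> and using the symmetry of \<open>J\<close> gives the balance
  \<open>d \<kappa> \<integral>\<^bsub>[x1,0]\<^esub>\<integral>\<^bsub>y < x1 - R\<^esub> J(x - y) + \<integral>\<^bsub>[x1,0]\<^esub> f(\<phi>) \<le> c \<phi>(x1) + d flux\<close> with
  \<open>\<kappa> = \<phi>(x1 - R) - \<phi>(x1)\<close>. A small flux forces \<open>\<phi>(-1)\<close> to be small, so we may pick \<open>x1\<close>
  with \<open>\<phi>(x1) = 2\<^sup>-\<^sup>k\<close>. The KPP bound \<open>f u \<ge> a u\<close> makes \<open>\<integral>\<^bsub>[x,0]\<^esub> \<phi>\<close> double on each step
  of length \<open>h = C / a\<close>, so \<open>\<phi>(x1 - k h) \<ge> 1/4\<close>, and the balance with \<open>R = k h\<close> bounds the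
  tail \<open>\<integral>\<^bsub>z \<ge> k h + 1\<^esub> J\<close> by a multiple of \<open>2\<^sup>-\<^sup>k\<close>. Such geometric tail decay gives
  \<open>\<integral> J(x) e\<^sup>\<lambda>\<^sup>x < \<infinity>\<close> for \<open>\<lambda> = ln 2 / (2 h)\<close>, contradicting the hypothesis on \<open>J\<close>.
\<close>

section \<open>Iterated integrals against the kernel\<close>

lemma nn_integral_iterated_add:
  fixes F G :: "real \<Rightarrow> real \<Rightarrow> ennreal"
  assumes [measurable]: "case_prod F \<in> borel_measurable (lborel \<Otimes>\<^sub>M lborel)"
    and [measurable]: "case_prod G \<in> borel_measurable (lborel \<Otimes>\<^sub>M lborel)"
  shows "(\<integral>\<^sup>+x. \<integral>\<^sup>+y. F x y + G x y \<partial>lborel \<partial>lborel)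
       = (\<integral>\<^sup>+x. \<integral>\<^sup>+y. F x y \<partial>lborel \<partial>lborel) + (\<integral>\<^sup>+x. \<integral>\<^sup>+y. G x y \<partial>lborel \<partial>lborel)"
proof -
  have "(\<integral>\<^sup>+x. \<integral>\<^sup>+y. F x y + G x y \<partial>lborel \<partial>lborel)
       = (\<integral>\<^sup>+x. (\<integral>\<^sup>+y. F x y \<partial>lborel) + (\<integral>\<^sup>+y. G x y \<partial>lborel) \<partial>lborel)"
    by (intro nn_integral_cong nn_integral_add) measurable
  also have "\<dots> = (\<integral>\<^sup>+x. \<integral>\<^sup>+y. F x y \<partial>lborel \<partial>lborel) + (\<integral>\<^sup>+x. \<integral>\<^sup>+y. G x y \<partial>lborel \<partial>lborel)"
    by (intro nn_integral_add) measurable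
  finally show ?thesis .
qed

lemma nn_integral_iterated_swap:
  fixes F :: "real \<Rightarrow> real \<Rightarrow> ennreal"
  assumes "case_prod F \<in> borel_measurable (lborel \<Otimes>\<^sub>M lborel)"
  shows "(\<integral>\<^sup>+x. \<integral>\<^sup>+y. F x y \<partial>lborel \<partial>lborel) = (\<integral>\<^sup>+x. \<integral>\<^sup>+y. F y x \<partial>lborel \<partial>lborel)"
  using lborel_pair.Fubini'[of F] assms by simp

lemma nn_integral_iterated_indicator_Un:
  fixes F :: "real \<Rightarrow> real \<Rightarrow> real"
  assumes [measurable]: "case_prod F \<in> borel_measurable (lborel \<Otimes>\<^sub>M lborel)"
    and [measurable]: "A \<in> sets borel" "B \<in> sets borel"
    and "A \<inter> B = {}" and "\<And>x y. 0 \<le> F x y"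
  shows "(\<integral>\<^sup>+x. \<integral>\<^sup>+y. ennreal (indicator (A \<union> B) y * F x y) \<partial>lborel \<partial>lborel)
       = (\<integral>\<^sup>+x. \<integral>\<^sup>+y. ennreal (indicator A y * F x y) \<partial>lborel \<partial>lborel)
         + (\<integral>\<^sup>+x. \<integral>\<^sup>+y. ennreal (indicator B y * F x y) \<partial>lborel \<partial>lborel)"
proof -
  have "ennreal (indicator (A \<union> B) y * F x y)
      = ennreal (indicator A y * F x y) + ennreal (indicator B y * F x y)" for x y
    using assms(4) assms(5)[of x y] by (auto simp: indicator_def ennreal_plus)
  then show ?thesis
    by (simp only:) (rule nn_integral_iterated_add; measurable)
qed

lemma nn_integral_kernel_eq_1:
  fixes J :: "real \<Rightarrow> real"
  assumes "\<And>x. 0 \<le> J x" "integrable lborel J" "integral\<^sup>L lborel J = 1"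
  shows "(\<integral>\<^sup>+z. ennreal (J z) \<partial>lborel) = 1"
  using nn_integral_eq_integral[OF assms(2)] assms by simp

lemma nn_integral_kernel_translate:
  fixes J :: "real \<Rightarrow> real"
  assumes [measurable]: "J \<in> borel_measurable borel"
    and "\<And>x. 0 \<le> J x" "integrable lborel J" "integral\<^sup>L lborel J = 1"
  shows "(\<integral>\<^sup>+y. ennreal (J (x - y)) \<partial>lborel) = 1"
  using nn_integral_real_affine[of "\<lambda>y. ennreal (J y)" "-1" x]
    nn_integral_kernel_eq_1[OF assms(2-4)] by simp

lemma nn_integral_kernel_mass:
  fixes J g :: "real \<Rightarrow> real"
  assumes [measurable]: "J \<in> borel_measurable borel" "g \<in> borel_measurable borel" "S \<in> sets borel"
    and J: "\<And>x. 0 \<le> J x" "integrable lborel J" "integral\<^sup>L lborel J = 1"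
    and g: "\<And>x. 0 \<le> g x"
  shows "(\<integral>\<^sup>+x. \<integral>\<^sup>+y. ennreal (indicator S x * J (x - y) * g x) \<partial>lborel \<partial>lborel)
       = (\<integral>\<^sup>+x. ennreal (g x) * indicator S x \<partial>lborel)"
proof (intro nn_integral_cong)
  fix x :: real
  have "(\<integral>\<^sup>+y. ennreal (indicator S x * J (x - y) * g x) \<partial>lborel)
      = (\<integral>\<^sup>+y. ennreal (g x * indicator S x) * ennreal (J (x - y)) \<partial>lborel)"
    using J(1) g by (intro nn_integral_cong) (simp add: ennreal_mult[symmetric] mult_ac)
  also have "\<dots> = ennreal (g x * indicator S x) * (\<integral>\<^sup>+y. ennreal (J (x - y)) \<partial>lborel)"
    by (rule nn_integral_cmult) measurable
  finally show "(\<integral>\<^sup>+y. ennreal (indicator S x * J (x - y) * g x) \<partial>lborel) = ennreal (g x) * indicator S x"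
    using nn_integral_kernel_translate[OF assms(1) J] g by (cases "x \<in> S") (simp_all add: ennreal_mult')
qed

definition tail :: "(real \<Rightarrow> real) \<Rightarrow> real \<Rightarrow> ennreal" where
  "tail J r = (\<integral>\<^sup>+z. ennreal (indicator {r..} z * J z) \<partial>lborel)"

definition interaction :: "(real \<Rightarrow> real) \<Rightarrow> real set \<Rightarrow> real set \<Rightarrow> ennreal" where
  "interaction J A B = (\<integral>\<^sup>+x. \<integral>\<^sup>+y. ennreal (indicator A x * indicator B y * J (x - y)) \<partial>lborel \<partial>lborel)"

definition flux :: "(real \<Rightarrow> real) \<Rightarrow> (real \<Rightarrow> real) \<Rightarrow> ennreal" where
  "flux J p = (\<integral>\<^sup>+x. \<integral>\<^sup>+y. ennreal (indicator {..0} x * indicator {0..} y * J (x - y) * p x) \<partial>lborel \<partial>lborel)"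

lemma tail_antimono:
  assumes "\<And>x. 0 \<le> J x" "r \<le> s"
  shows "tail J s \<le> tail J r"
  unfolding tail_def by (intro nn_integral_mono ennreal_leI) (use assms in \<open>auto simp: indicator_def\<close>)

lemma tail_le_1:
  assumes "\<And>x. 0 \<le> J x" "integrable lborel J" "integral\<^sup>L lborel J = 1"
  shows "tail J r \<le> 1"
proof -
  have "tail J r \<le> (\<integral>\<^sup>+z. ennreal (J z) \<partial>lborel)" unfolding tail_def
    by (intro nn_integral_mono ennreal_leI) (use assms in \<open>auto simp: indicator_def\<close>)
  then show ?thesis using nn_integral_kernel_eq_1[OF assms] by simp
qed

lemma far_field_exchange:
  fixes J q :: "real \<Rightarrow> real" and x1 R :: real
  assumes [measurable]: "J \<in> borel_measurable borel" "q \<in> borel_measurable borel"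
    and J_nonneg: "\<And>x. 0 \<le> J x" and q_nonneg: "\<And>x. 0 \<le> q x"
    and q_noninc: "\<And>x y. x \<le> y \<Longrightarrow> y \<le> 0 \<Longrightarrow> q y \<le> q x"
    and "x1 < 0" "0 \<le> R"
  shows "(\<integral>\<^sup>+x. \<integral>\<^sup>+y. ennreal (indicator {..<x1} y * (indicator {x1..0} x * J (x - y) * q x)) \<partial>lborel \<partial>lborel)
         + ennreal (q (x1 - R) - q x1) * interaction J {x1..0} {..<x1 - R}
       \<le> (\<integral>\<^sup>+x. \<integral>\<^sup>+y. ennreal (indicator {..<x1} y * (indicator {x1..0} x * J (x - y) * q y)) \<partial>lborel \<partial>lborel)"
proof -
  define \<kappa> where "\<kappa> = q (x1 - R) - q x1"
  have \<kappa>: "0 \<le> \<kappa>" unfolding \<kappa>_def using q_noninc[of "x1 - R" x1] assms by simp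
  have "ennreal \<kappa> * interaction J {x1..0} {..<x1 - R}
      = (\<integral>\<^sup>+x. ennreal \<kappa> * \<integral>\<^sup>+y. ennreal (indicator {x1..0} x * indicator {..<x1 - R} y * J (x - y)) \<partial>lborel \<partial>lborel)"
    unfolding interaction_def by (rule nn_integral_cmult[symmetric]) measurable
  also have "\<dots> = (\<integral>\<^sup>+x. \<integral>\<^sup>+y. ennreal (indicator {x1..0} x * indicator {..<x1 - R} y * J (x - y) * \<kappa>) \<partial>lborel \<partial>lborel)"
    using \<kappa> J_nonneg
    by (intro nn_integral_cong, subst nn_integral_cmult[symmetric])
       (measurable, auto intro!: nn_integral_cong simp: ennreal_mult'[symmetric] mult_ac)
  finally have scaled: "ennreal \<kappa> * interaction J {x1..0} {..<x1 - R} = \<dots>" .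
  have pointwise:
    "ennreal (indicator {..<x1} y * (indicator {x1..0} x * J (x - y) * q x))
       + ennreal (indicator {x1..0} x * indicator {..<x1 - R} y * J (x - y) * \<kappa>)
     \<le> ennreal (indicator {..<x1} y * (indicator {x1..0} x * J (x - y) * q y))" for x y
  proof (cases "x1 \<le> x \<and> x \<le> 0 \<and> y < x1")
    case True
    have "q x + indicator {..<x1 - R} y * \<kappa> \<le> q y"
      using True q_noninc[of x1 x] q_noninc[of y x1] q_noninc[of y "x1 - R"] assms(6,7)
      by (cases "y < x1 - R") (auto simp: indicator_def \<kappa>_def)
    then have "J (x - y) * (q x + indicator {..<x1 - R} y * \<kappa>) \<le> J (x - y) * q y"
      using J_nonneg by (rule mult_left_mono)
    then show ?thesis
      using True J_nonneg[of "x - y"] q_nonneg[of x] \<kappa>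
      by (simp add: ennreal_plus[symmetric] algebra_simps del: ennreal_plus) (metis ennreal_leI)
  next
    case False
    then show ?thesis using assms(7) by (auto simp: indicator_def)
  qed
  show ?thesis
    unfolding \<kappa>_def[symmetric] scaled
    by (subst nn_integral_iterated_add[symmetric]; (measurable)?)
       (intro nn_integral_mono pointwise)
qed

lemma kernel_exchange:
  fixes J q :: "real \<Rightarrow> real" and x1 R :: real
  assumes [measurable]: "J \<in> borel_measurable borel" "q \<in> borel_measurable borel"
    and J_nonneg: "\<And>x. 0 \<le> J x" and J_even: "\<And>x. J (- x) = J x"
    and q_nonneg: "\<And>x. 0 \<le> q x"
    and q_noninc: "\<And>x y. x \<le> y \<Longrightarrow> y \<le> 0 \<Longrightarrow> q y \<le> q x"
    and x1: "x1 < 0" and R: "0 \<le> R"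
  shows "(\<integral>\<^sup>+x. \<integral>\<^sup>+y. ennreal (indicator {x1..0} x * J (x - y) * q x) \<partial>lborel \<partial>lborel)
         + ennreal (q (x1 - R) - q x1) * interaction J {x1..0} {..<x1 - R}
       \<le> (\<integral>\<^sup>+x. \<integral>\<^sup>+y. ennreal (indicator {..0} y * (indicator {x1..0} x * J (x - y) * q y)) \<partial>lborel \<partial>lborel)
         + flux J q"
proof -
  \<comment> \<open>Split \<open>y\<close> into \<open>[x1, 0]\<close>, \<open>(0, \<infinity>)\<close> and \<open>(-\<infinity>, x1)\<close>: on the first part the two sides agree
    by the symmetry of \<open>J\<close>, the second part is dominated by the flux, and on the third the
    monotonicity of \<open>q\<close> gains \<open>\<kappa>\<close> wherever \<open>y < x1 - R\<close>.\<close>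
  define S where "S = {x1..0}"
  define F where "F x y = indicator S x * J (x - y) * q y" for x y
  define G where "G x y = indicator S x * J (x - y) * q x" for x y
  have [measurable]: "S \<in> sets borel" "case_prod F \<in> borel_measurable (lborel \<Otimes>\<^sub>M lborel)"
    "case_prod G \<in> borel_measurable (lborel \<Otimes>\<^sub>M lborel)"
    unfolding S_def F_def G_def by measurable
  have F_nonneg: "0 \<le> F x y" and G_nonneg: "0 \<le> G x y" for x y
    using J_nonneg q_nonneg by (simp_all add: F_def G_def)
  let ?I = "\<lambda>A H. \<integral>\<^sup>+x. \<integral>\<^sup>+y. ennreal (indicator A y * H x y) \<partial>lborel \<partial>lborel"
  have conv: "?I {..0} F = ?I S F + ?I {..<x1} F"
  proof -
    have "{..0} = S \<union> {..<x1}" using x1 by (auto simp: S_def)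
    then show ?thesis
      by (simp only:) (rule nn_integral_iterated_indicator_Un; use F_nonneg in \<open>auto simp: S_def\<close>)
  qed
  have mass: "(\<integral>\<^sup>+x. \<integral>\<^sup>+y. ennreal (G x y) \<partial>lborel \<partial>lborel) = ?I S G + ?I {0<..} G + ?I {..<x1} G"
  proof -
    have "indicator ((S \<union> {0<..}) \<union> {..<x1}) y = (1::real)" for y
      by (simp add: S_def indicator_def)
    then have "(\<integral>\<^sup>+x. \<integral>\<^sup>+y. ennreal (G x y) \<partial>lborel \<partial>lborel) = ?I ((S \<union> {0<..}) \<union> {..<x1}) G"
      by simp
    also have "\<dots> = ?I (S \<union> {0<..}) G + ?I {..<x1} G"
      by (rule nn_integral_iterated_indicator_Un; use G_nonneg x1 in \<open>auto simp: S_def\<close>)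
    also have "?I (S \<union> {0<..}) G = ?I S G + ?I {0<..} G"
      by (rule nn_integral_iterated_indicator_Un; use G_nonneg in \<open>auto simp: S_def\<close>)
    finally show ?thesis .
  qed
  have near_symmetric: "?I S G = ?I S F"
    by (subst nn_integral_iterated_swap) (measurable,
        auto intro!: nn_integral_cong simp: F_def G_def mult_ac J_even[of "x - y" for x y, simplified])
  have near_flux: "?I {0<..} G \<le> flux J q"
    unfolding flux_def G_def S_def
    by (intro nn_integral_mono ennreal_leI)
       (use J_nonneg q_nonneg x1 in \<open>auto simp: indicator_def\<close>)
  have far: "?I {..<x1} G + ennreal (q (x1 - R) - q x1) * interaction J S {..<x1 - R} \<le> ?I {..<x1} F"
    unfolding F_def G_def S_def by (rule far_field_exchange) (use assms in auto)
  have "(\<integral>\<^sup>+x. \<integral>\<^sup>+y. ennreal (G x y) \<partial>lborel \<partial>lborel) + ennreal (q (x1 - R) - q x1) * interaction J S {..<x1 - R}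
      = ?I S G + ?I {0<..} G + (?I {..<x1} G + ennreal (q (x1 - R) - q x1) * interaction J S {..<x1 - R})"
    by (simp add: mass ac_simps)
  also have "\<dots> \<le> ?I S F + flux J q + ?I {..<x1} F"
    using near_symmetric near_flux far by (intro add_mono) auto
  also have "\<dots> = ?I {..0} F + flux J q"
    by (simp only: conv add_ac)
  finally show ?thesis by (simp add: F_def G_def S_def)
qed

lemma tail_le_interaction:
  fixes J :: "real \<Rightarrow> real" and a b c :: real
  assumes [measurable]: "J \<in> borel_measurable borel"
    and J_nonneg: "\<And>x. 0 \<le> J x" and "a + 1 \<le> b"
  shows "tail J (a + 1 - c) \<le> interaction J {a..b} {..<c}"
proof -
  have inner: "tail J (a + 1 - c) * indicator {a..<a + 1} x
      \<le> (\<integral>\<^sup>+y. ennreal (indicator {a..b} x * indicator {..<c} y * J (x - y)) \<partial>lborel)" for x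
  proof (cases "x \<in> {a..<a + 1}")
    case True
    have "tail J (a + 1 - c) \<le> (\<integral>\<^sup>+z. ennreal (indicator {..<c} (x + (-1) * z) * J (x - (x + (-1) * z))) \<partial>lborel)"
      unfolding tail_def
      by (intro nn_integral_mono ennreal_leI) (use True J_nonneg in \<open>auto simp: indicator_def\<close>)
    also have "\<dots> = (\<integral>\<^sup>+y. ennreal (indicator {..<c} y * J (x - y)) \<partial>lborel)"
      using nn_integral_real_affine[of "\<lambda>y. ennreal (indicator {..<c} y * J (x - y))" "-1" x] by simp
    also have "\<dots> = (\<integral>\<^sup>+y. ennreal (indicator {a..b} x * indicator {..<c} y * J (x - y)) \<partial>lborel)"
      using True assms(3) by (intro nn_integral_cong) auto
    finally show ?thesis using True by simp
  qed simp
  have "tail J (a + 1 - c) = (\<integral>\<^sup>+x. tail J (a + 1 - c) * indicator {a..<a + 1} x \<partial>lborel)"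
    by (subst nn_integral_cmult_indicator) auto
  also have "\<dots> \<le> interaction J {a..b} {..<c}"
    unfolding interaction_def by (intro nn_integral_mono inner)
  finally show ?thesis .
qed

lemma tail_le_flux:
  fixes J p :: "real \<Rightarrow> real"
  assumes [measurable]: "J \<in> borel_measurable borel"
    and J_nonneg: "\<And>x. 0 \<le> J x" and J_even: "\<And>x. J (- x) = J x"
    and p_nonneg: "\<And>x. x \<le> 0 \<Longrightarrow> 0 \<le> p x"
    and p_noninc: "\<And>x y. x \<le> y \<Longrightarrow> y \<le> 0 \<Longrightarrow> p y \<le> p x"
  shows "ennreal (p (-1)) * tail J 2 \<le> flux J p"
proof -
  have inner: "ennreal (p (-1)) * tail J 2 * indicator {-2..<-1} x
      \<le> (\<integral>\<^sup>+y. ennreal (indicator {..0} x * indicator {0..} y * J (x - y) * p x) \<partial>lborel)" for x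
  proof (cases "x \<in> {-2..<-1}")
    case True
    have "tail J 2 \<le> (\<integral>\<^sup>+z. ennreal (indicator {0..} (x + 1 * z) * J (x - (x + 1 * z))) \<partial>lborel)"
      unfolding tail_def
      by (intro nn_integral_mono ennreal_leI) (use True J_nonneg J_even in \<open>auto simp: indicator_def\<close>)
    also have "\<dots> = (\<integral>\<^sup>+y. ennreal (indicator {0..} y * J (x - y)) \<partial>lborel)"
      using nn_integral_real_affine[of "\<lambda>y. ennreal (indicator {0..} y * J (x - y))" 1 x] by simp
    finally have "ennreal (p (-1)) * tail J 2 \<le> ennreal (p x) * (\<integral>\<^sup>+y. ennreal (indicator {0..} y * J (x - y)) \<partial>lborel)"
      using True p_noninc[of x "-1"] by (intro mult_mono ennreal_leI) auto
    also have "\<dots> = (\<integral>\<^sup>+y. ennreal (p x) * ennreal (indicator {0..} y * J (x - y)) \<partial>lborel)"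
      by (rule nn_integral_cmult[symmetric]) measurable
    also have "\<dots> = (\<integral>\<^sup>+y. ennreal (indicator {..0} x * indicator {0..} y * J (x - y) * p x) \<partial>lborel)"
      using True p_nonneg[of x] J_nonneg by (intro nn_integral_cong) (simp add: ennreal_mult[symmetric] mult_ac)
    finally show ?thesis using True by simp
  qed simp
  have "ennreal (p (-1)) * tail J 2 = (\<integral>\<^sup>+x. ennreal (p (-1)) * tail J 2 * indicator {-2..<-1::real} x \<partial>lborel)"
    by (subst nn_integral_cmult_indicator) auto
  also have "\<dots> \<le> flux J p"
    unfolding flux_def by (intro nn_integral_mono inner)
  finally show ?thesis .
qed

lemma flux_eq_integral:
  fixes J p :: "real \<Rightarrow> real"
  assumes J_int: "integrable lborel J" and J_nonneg: "\<And>x. 0 \<le> J x"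
    and p_nonneg: "\<And>x. x \<le> 0 \<Longrightarrow> 0 \<le> p x"
    and nonzero: "(LINT x:{..0}|lborel. (LINT y:{0..}|lborel. J (x - y) * p x)) \<noteq> 0"
  shows "flux J p = ennreal (LINT x:{..0}|lborel. (LINT y:{0..}|lborel. J (x - y) * p x))"
proof -
  define G where "G x = (LINT y:{0..}|lborel. J (x - y) * p x)" for x
  have G_nonpos: "0 \<le> G x"
    "ennreal (G x) = (\<integral>\<^sup>+y. ennreal (indicator {0..} y *\<^sub>R (J (x - y) * p x)) \<partial>lborel)"
    if "x \<le> 0" for x
  proof -
    have "integrable lborel (\<lambda>y. J (x + (-1) * y))"
      using lborel_integrable_real_affine_iff[of "-1" J x] J_int by simp
    then have int: "integrable lborel (\<lambda>y. indicator {0..} y *\<^sub>R (J (x - y) * p x))"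
      by (intro integrable_mult_indicator integrable_mult_left) simp_all
    have G_eq: "G x = integral\<^sup>L lborel (\<lambda>y. indicator {0..} y *\<^sub>R (J (x - y) * p x))"
      by (simp only: G_def set_lebesgue_integral_def)
    show "0 \<le> G x"
      unfolding G_eq using J_nonneg p_nonneg[OF that] by (auto intro!: integral_nonneg_AE)
    show "ennreal (G x) = (\<integral>\<^sup>+y. ennreal (indicator {0..} y *\<^sub>R (J (x - y) * p x)) \<partial>lborel)"
      unfolding G_eq by (rule nn_integral_eq_integral[OF int, symmetric])
        (use J_nonneg p_nonneg[OF that] in \<open>auto simp: indicator_def\<close>)
  qed
  have G: "0 \<le> indicator {..0} x * G x"
    "ennreal (indicator {..0} x * G x)
       = (\<integral>\<^sup>+y. ennreal (indicator {..0} x * indicator {0..} y * J (x - y) * p x) \<partial>lborel)" for x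
    using G_nonpos[of x] by (cases "x \<le> 0"; simp add: mult_ac)+
  \<comment> \<open>The Bochner integral of a non-integrable function is \<open>0\<close>, which the hypothesis excludes.\<close>
  have "integrable lborel (\<lambda>x. indicator {..0} x * G x)"
  proof (rule ccontr)
    assume "\<not> integrable lborel (\<lambda>x. indicator {..0} x * G x)"
    then have "integral\<^sup>L lborel (\<lambda>x. indicator {..0} x * G x) = 0"
      by (rule not_integrable_integral_eq)
    then show False using nonzero unfolding G_def set_lebesgue_integral_def by simp
  qed
  then have "(\<integral>\<^sup>+x. ennreal (indicator {..0} x * G x) \<partial>lborel) = ennreal (LINT x:{..0}|lborel. G x)"
    using G(1) by (simp add: nn_integral_eq_integral set_lebesgue_integral_def)
  then show ?thesis unfolding flux_def G(2)[symmetric] G_def by simp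
qed

section \<open>Geometric tail decay\<close>

lemma exp_weight_le_tail_sum:
  fixes lam h w x :: real
  assumes lam: "0 < lam" and h: "0 < h" and w: "0 \<le> w"
  shows "ennreal (w * exp (lam * x))
    \<le> ennreal (exp lam) * ennreal w
      + (\<Sum>k. ennreal (exp (lam * (real (Suc k) * h + 1))) * ennreal (indicator {real k * h + 1..} x * w))"
proof (cases "x < 1")
  case True
  then have "ennreal (w * exp (lam * x)) \<le> ennreal (exp lam) * ennreal w"
    using lam w by (simp add: ennreal_mult'[symmetric] mult.commute mult_left_mono ennreal_leI)
  then show ?thesis by (rule order_trans) simp
next
  case False
  define k where "k = nat \<lfloor>(x - 1) / h\<rfloor>"
  have "0 \<le> (x - 1) / h" using False h by simp
  then have "real k \<le> (x - 1) / h" "(x - 1) / h < real k + 1"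
    unfolding k_def by (auto simp: of_nat_nat)
  then have x: "real k * h + 1 \<le> x" "x \<le> real (Suc k) * h + 1"
    using h by (simp_all add: field_simps)
  have "w * exp (lam * x) \<le> exp (lam * (real (Suc k) * h + 1)) * (indicator {real k * h + 1..} x * w)"
    using x lam w by (simp add: mult.commute mult_left_mono)
  then have "ennreal (w * exp (lam * x))
      \<le> ennreal (exp (lam * (real (Suc k) * h + 1))) * ennreal (indicator {real k * h + 1..} x * w)"
    using w by (simp add: ennreal_mult'[symmetric] ennreal_leI)
  also have "\<dots> \<le> (\<Sum>k. ennreal (exp (lam * (real (Suc k) * h + 1))) * ennreal (indicator {real k * h + 1..} x * w))"
    using sum_le_suminf[of "\<lambda>k. ennreal (exp (lam * (real (Suc k) * h + 1))) * ennreal (indicator {real k * h + 1..} x * w)" "{k}"]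
    by simp
  finally show ?thesis by (rule order_trans) simp
qed

lemma exp_moment_finite_if_tail_geometric:
  fixes J :: "real \<Rightarrow> real" and h K :: real
  assumes [measurable]: "J \<in> borel_measurable borel"
    and J: "\<And>x. 0 \<le> J x" "integrable lborel J" "integral\<^sup>L lborel J = 1"
    and h: "0 < h" and K: "0 \<le> K"
    and tail_bound: "\<And>k. tail J (real k * h + 1) \<le> ennreal (K * (1/2)^k)"
  shows "\<exists>lam>0. (\<integral>\<^sup>+x. ennreal (J x * exp (lam * x)) \<partial>lborel) < \<infinity>"
proof -
  \<comment> \<open>With this choice the weights grow like \<open>\<surd>2\<^sup>k\<close> against tails of order \<open>2\<^sup>-\<^sup>k\<close>.\<close>
  define lam where "lam = ln 2 / (2 * h)"
  have lam: "0 < lam" using h by (simp add: lam_def)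
  define r where "r = exp (lam * h) / 2"
  have "lam * h < ln 2" using h by (simp add: lam_def)
  then have "exp (lam * h) < 2" using exp_less_cancel_iff[of "lam * h" "ln 2"] by simp
  then have r: "0 \<le> r" "r < 1" by (simp_all add: r_def)
  define C where "C = exp (lam * (h + 1))"
  have weighted_tail:
    "ennreal (exp (lam * (real (Suc k) * h + 1))) * tail J (real k * h + 1) \<le> ennreal (C * K * r ^ k)" for k
  proof -
    have "exp (lam * (real (Suc k) * h + 1)) = C * (2 * r) ^ k"
      unfolding C_def r_def by (simp add: exp_add[symmetric] exp_of_nat_mult[symmetric] algebra_simps)
    then have weight: "exp (lam * (real (Suc k) * h + 1)) * (K * (1/2)^k) = C * K * r ^ k"
      by (simp add: power_mult_distrib power_divide)
    have "ennreal (exp (lam * (real (Suc k) * h + 1))) * tail J (real k * h + 1)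
        \<le> ennreal (exp (lam * (real (Suc k) * h + 1))) * ennreal (K * (1/2)^k)"
      by (intro mult_left_mono tail_bound) simp
    also have "\<dots> = ennreal (C * K * r ^ k)"
      by (subst weight[symmetric], subst ennreal_mult) (use K in auto)
    finally show ?thesis .
  qed
  have "(\<integral>\<^sup>+x. ennreal (J x * exp (lam * x)) \<partial>lborel)
     \<le> (\<integral>\<^sup>+x. ennreal (exp lam) * ennreal (J x)
          + (\<Sum>k. ennreal (exp (lam * (real (Suc k) * h + 1))) * ennreal (indicator {real k * h + 1..} x * J x)) \<partial>lborel)"
    by (intro nn_integral_mono exp_weight_le_tail_sum lam h J(1))
  also have "\<dots> = ennreal (exp lam) * (\<integral>\<^sup>+x. ennreal (J x) \<partial>lborel)
      + (\<Sum>k. ennreal (exp (lam * (real (Suc k) * h + 1))) * tail J (real k * h + 1))"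
    by (simp add: nn_integral_add nn_integral_suminf nn_integral_cmult tail_def)
  also have "\<dots> \<le> ennreal (exp lam) + (\<Sum>k. ennreal (C * K * r ^ k))"
    using nn_integral_kernel_eq_1[OF J] weighted_tail by (auto intro!: add_mono suminf_le)
  also have "\<dots> = ennreal (exp lam) + ennreal (\<Sum>k. C * K * r ^ k)"
    using r K by (subst suminf_ennreal2) (auto simp: C_def intro!: summable_mult summable_geometric)
  also have "\<dots> < \<infinity>" by simp
  finally show ?thesis using lam by blast
qed

lemma tail_geometric_bound:
  fixes J :: "real \<Rightarrow> real" and h K :: real
  assumes J: "\<And>x. 0 \<le> J x" "integrable lborel J" "integral\<^sup>L lborel J = 1" and h: "0 < h"
    and bound: "\<And>k. tail J 2 \<noteq> 0 \<Longrightarrow> 3 \<le> k \<Longrightarrow> tail J (real k * h + 1) \<le> ennreal (K * (1/2)^k)"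
  shows "\<exists>K'\<ge>0. \<forall>k. tail J (real k * h + 1) \<le> ennreal (K' * (1/2)^k)"
proof -
  obtain k0 where eventually: "\<And>k. k0 \<le> k \<Longrightarrow> tail J (real k * h + 1) \<le> ennreal (K * (1/2)^k)"
  proof (cases "tail J 2 = 0")
    case True
    have "tail J (real k * h + 1) = 0" if "nat \<lceil>1 / h\<rceil> \<le> k" for k
    proof -
      have "1 / h \<le> real k" using that by linarith
      then have "2 \<le> real k * h + 1" using h by (simp add: field_simps)
      then show ?thesis using tail_antimono[of J 2 "real k * h + 1"] J(1) True by simp
    qed
    then show ?thesis using that[of "nat \<lceil>1 / h\<rceil>"] by simp
  qed (use bound in blast)
  define K' where "K' = \<bar>K\<bar> + 2 ^ k0"
  have "(0::real) \<le> 2 ^ k0" by simp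
  then have K': "0 \<le> K'" "K \<le> K'" "2 ^ k0 \<le> K'"
    using abs_ge_self[of K] abs_ge_zero[of K] unfolding K'_def by linarith+
  have "tail J (real k * h + 1) \<le> ennreal (K' * (1/2)^k)" for k
  proof (cases "k0 \<le> k")
    case True
    have "K * (1/2)^k \<le> K' * (1/2::real)^k" using K' by (intro mult_right_mono) auto
    then show ?thesis using eventually[OF True] by (meson ennreal_leI order_trans)
  next
    case False
    have "(1::real) \<le> 2 ^ k0 * (1/2)^k"
      using False by (simp add: field_simps flip: power_add)
    also have "\<dots> \<le> K' * (1/2)^k" using K' by (intro mult_right_mono) auto
    finally have "(1::ennreal) \<le> ennreal (K' * (1/2)^k)"
      by (metis ennreal_1 ennreal_leI)
    then show ?thesis using tail_le_1[OF J] order_trans by blast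
  qed
  then show ?thesis using K'(1) by blast
qed


section \<open>Doubling of the profile integral\<close>

lemma integral_doubling:
  fixes p :: "real \<Rightarrow> real" and h E x1 :: real and j :: nat
  assumes h: "0 < h"
    and p_nonneg: "\<And>x. x \<le> 0 \<Longrightarrow> 0 \<le> p x"
    and p_noninc: "\<And>x y. x \<le> y \<Longrightarrow> y \<le> 0 \<Longrightarrow> p y \<le> p x"
    and p_cont: "continuous_on {..0} p"
    and bound: "\<And>x. x < 0 \<Longrightarrow> p x \<le> 1/2 \<Longrightarrow> integral {x..0} p \<le> h * p x + E"
    and x1: "x1 < 0" and small: "p (x1 - real (Suc j) * h) \<le> 1/2"
  shows "2 ^ j * (h * p x1 - E) \<le> integral {x1 - real (Suc j) * h..0} p - E"
proof -
  define I where "I x = integral {x..0} p" for x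
  have p_int: "p integrable_on {x..y}" if "y \<le> 0" for x y
    by (rule integrable_continuous_interval) (use p_cont that in \<open>auto intro: continuous_on_subset\<close>)
  \<comment> \<open>Each step to the left adds at least \<open>h * p x \<ge> I x - E\<close>, so \<open>I - E\<close> doubles.\<close>
  have I_step: "I x + h * p x \<le> I (x - h)" if "x \<le> 0" for x
  proof -
    have "integral {x - h..x} p + I x = I (x - h)"
      using Henstock_Kurzweil_Integration.integral_combine[of "x - h" x 0 p] that h p_int[of 0 "x - h"]
      by (simp add: I_def)
    moreover have "h * p x \<le> integral {x - h..x} p"
      using integral_le[of "\<lambda>_. p x" "{x - h..x}" p] p_int that p_noninc h by auto
    ultimately show ?thesis by linarith
  qed
  show ?thesis
    using small unfolding I_def[symmetric]
  proof (induction j)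
    case 0
    have "0 \<le> I x1"
      unfolding I_def by (rule integral_nonneg[OF p_int]) (auto intro: p_nonneg)
    then show ?case using I_step[of x1] x1 by simp
  next
    case (Suc j)
    define x where "x = x1 - real (Suc j) * h"
    have "0 \<le> real (Suc j) * h" using h by simp
    then have x: "x < 0" "x1 - real (Suc (Suc j)) * h = x - h"
      using x1 by (simp_all add: x_def algebra_simps)
    have "p x \<le> 1/2" using p_noninc[of "x - h" x] x h Suc.prems by simp
    then have "I x - E \<le> h * p x" using bound[OF x(1)] by (simp add: I_def)
    moreover have "2 ^ j * (h * p x1 - E) \<le> I x - E"
      using Suc.IH \<open>p x \<le> 1/2\<close> by (simp add: x_def)
    ultimately show ?case using I_step[of x] x by simp
  qed
qed

lemma integral_doubling_escape:
  fixes p :: "real \<Rightarrow> real" and a C D x1 :: real and k :: nat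
  assumes a: "0 < a" and C: "0 < C"
    and p_nonneg: "\<And>x. x \<le> 0 \<Longrightarrow> 0 \<le> p x"
    and p_noninc: "\<And>x y. x \<le> y \<Longrightarrow> y \<le> 0 \<Longrightarrow> p y \<le> p x"
    and p_cont: "continuous_on {..0} p"
    and bound: "\<And>x. x < 0 \<Longrightarrow> p x \<le> 1/2 \<Longrightarrow> a * integral {x..0} p \<le> C * p x + D"
    and x1: "x1 < 0" "p x1 = (1/2)^k" and k: "1 \<le> k" and D: "D \<le> C * (1/2)^k / 2"
  shows "1/4 \<le> p (x1 - real k * (C / a))"
proof (rule ccontr)
  define x where "x = x1 - real k * (C / a)"
  obtain j where j: "k = Suc j" using k by (cases k) auto
  assume "\<not> 1/4 \<le> p (x1 - real k * (C / a))"
  then have px: "p x < 1/4" by (simp add: x_def)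
  have "0 \<le> real k * (C / a)" using a C by simp
  then have "x < 0" using x1 by (simp add: x_def)
  have bound': "integral {y..0} p \<le> C / a * p y + D / a" if "y < 0" "p y \<le> 1/2" for y
    using bound[OF that] a by (simp add: field_simps)
  have "2 ^ j * (C * p x1 - D) = a * (2 ^ j * (C / a * p x1 - D / a))"
    using a by (simp add: field_simps)
  also have "\<dots> \<le> a * (integral {x..0} p - D / a)"
    using integral_doubling[OF _ p_nonneg p_noninc p_cont bound' x1(1), of j] px a C
    by (simp add: j x_def)
  also have "\<dots> \<le> C * p x"
    using bound[OF \<open>x < 0\<close>] px a by (simp add: right_diff_distrib)
  finally have "2 ^ j * (C * (1/2)^k - D) \<le> C * p x" using x1 by simp
  moreover have "C / 4 \<le> 2 ^ j * (C * (1/2)^k - D)"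
  proof -
    have "(2::real) ^ j * (1/2)^k = 1/2" by (simp add: j power_divide)
    then show ?thesis using D by (simp add: field_simps)
  qed
  moreover have "C * p x < C / 4" using mult_strict_left_mono[OF px C] by simp
  ultimately show False by linarith
qed

section \<open>Semi-waves\<close>

locale semi_wave =
  fixes J :: "real \<Rightarrow> real" and d cc :: real and f p p' :: "real \<Rightarrow> real"
  assumes kernel_cont: "continuous_on UNIV J"
    and kernel_nonneg: "\<And>x. 0 \<le> J x"
    and kernel_integrable: "integrable lborel J"
    and kernel_mass: "integral\<^sup>L lborel J = 1"
    and kernel_even: "\<And>x. J (- x) = J x"
    and diffusion_pos: "0 < d"
    and speed_nonneg: "0 \<le> cc"
    and reaction_cont: "continuous_on {0..} f"
    and reaction_nonneg: "\<And>u. 0 \<le> u \<Longrightarrow> u \<le> 1 \<Longrightarrow> 0 \<le> f u"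
    and profile_deriv: "\<And>x. x \<le> 0 \<Longrightarrow> (p has_real_derivative p' x) (at x within {..0})"
    and profile_nonneg: "\<And>x. x \<le> 0 \<Longrightarrow> 0 \<le> p x"
    and profile_noninc: "\<And>x y. x \<le> y \<Longrightarrow> y \<le> 0 \<Longrightarrow> p y \<le> p x"
    and profile_eq: "\<And>x. x < 0 \<Longrightarrow>
          d * (LINT y:{..0}|lborel. J (x - y) * p y) - d * p x + cc * p' x + f (p x) = 0"
    and profile_minf: "(p \<longlongrightarrow> 1) at_bot"
    and profile_zero: "p 0 = 0"
begin

lemma kernel_measurable [measurable]: "J \<in> borel_measurable borel"
  using kernel_cont by (simp add: borel_measurable_continuous_onI)

lemma profile_cont: "continuous_on {..0} p"
  unfolding continuous_on_eq_continuous_within using profile_deriv DERIV_continuous by fastforce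

lemma profile_le_1: "x \<le> 0 \<Longrightarrow> p x \<le> 1"
  using tendsto_lowerbound[OF profile_minf, of "p x"] profile_noninc
  by (auto simp: eventually_at_bot_linorder)

lemma profile_integrable: "y \<le> 0 \<Longrightarrow> p integrable_on {x..y}"
  by (rule integrable_continuous_interval) (use profile_cont in \<open>auto intro: continuous_on_subset\<close>)

lemma reaction_integrable: "(\<lambda>x. f (p x)) integrable_on {x..0}"
  by (rule integrable_continuous_interval, rule continuous_on_compose2[OF reaction_cont])
     (use profile_cont profile_nonneg in \<open>auto intro: continuous_on_subset\<close>)

lemma convolution_nonneg_nn_integral:
  shows "0 \<le> (LINT y:{..0}|lborel. J (x - y) * p y)"
    and "ennreal (LINT y:{..0}|lborel. J (x - y) * p y)
       = (\<integral>\<^sup>+y. ennreal (indicator {..0} y * (J (x - y) * p y)) \<partial>lborel)"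
proof -
  define q where "q y = indicator {..0} y * p y" for y
  have [measurable]: "q \<in> borel_measurable borel"
    unfolding q_def using borel_measurable_continuous_on_indicator[OF _ profile_cont] by simp
  have q: "0 \<le> q y" "q y \<le> 1" for y
    using profile_nonneg profile_le_1 by (simp_all add: q_def indicator_def)
  have eq: "(LINT y:{..0}|lborel. J (x - y) * p y) = integral\<^sup>L lborel (\<lambda>y. J (x - y) * q y)"
    unfolding set_lebesgue_integral_def q_def by (simp add: mult_ac)
  have "integrable lborel (\<lambda>y. J (x + (-1) * y))"
    using lborel_integrable_real_affine_iff[of "-1" J x] kernel_integrable by simp
  then have int: "integrable lborel (\<lambda>y. J (x - y) * q y)"
    by (rule Bochner_Integration.integrable_bound)
       (use q kernel_nonneg in \<open>auto simp: mult_left_le\<close>)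
  show "0 \<le> (LINT y:{..0}|lborel. J (x - y) * p y)"
    unfolding eq by (intro integral_nonneg_AE AE_I2 mult_nonneg_nonneg kernel_nonneg q(1))
  show "ennreal (LINT y:{..0}|lborel. J (x - y) * p y)
       = (\<integral>\<^sup>+y. ennreal (indicator {..0} y * (J (x - y) * p y)) \<partial>lborel)"
  proof -
    have "(\<integral>\<^sup>+y. ennreal (J (x - y) * q y) \<partial>lborel) = ennreal (integral\<^sup>L lborel (\<lambda>y. J (x - y) * q y))"
      by (rule nn_integral_eq_integral[OF int]) (intro AE_I2 mult_nonneg_nonneg kernel_nonneg q(1))
    then show ?thesis unfolding eq by (simp add: q_def mult_ac)
  qed
qed

lemma integrated_equation:
  assumes "x1 \<le> 0"
  shows "((\<lambda>x. LINT y:{..0}|lborel. J (x - y) * p y) has_integral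
           integral {x1..0} p + (cc * p x1 - integral {x1..0} (\<lambda>x. f (p x))) / d) {x1..0}"
proof -
  have "(p' has_integral (p 0 - p x1)) {x1..0}"
  proof (rule fundamental_theorem_of_calculus)
    fix x assume "x \<in> {x1..0}"
    then have "(p has_real_derivative p' x) (at x within {x1..0})"
      using profile_deriv[of x] by (auto intro: DERIV_subset)
    then show "(p has_vector_derivative p' x) (at x within {x1..0})"
      by (simp add: has_real_derivative_iff_has_vector_derivative)
  qed (use assms in simp)
  then have "((\<lambda>x. (1/d) * (d * p x - cc * p' x - f (p x))) has_integral
      (1/d) * (d * integral {x1..0} p - cc * (p 0 - p x1) - integral {x1..0} (\<lambda>x. f (p x)))) {x1..0}"
    using profile_integrable[of 0 x1] reaction_integrable[of x1]
    by (intro has_integral_mult_right has_integral_diff) auto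
  then have "((\<lambda>x. (1/d) * (d * p x - cc * p' x - f (p x))) has_integral
      integral {x1..0} p + (cc * p x1 - integral {x1..0} (\<lambda>x. f (p x))) / d) {x1..0}"
    using diffusion_pos profile_zero by (simp add: field_simps)
  moreover have "(1/d) * (d * p x - cc * p' x - f (p x)) = (LINT y:{..0}|lborel. J (x - y) * p y)"
    if "x \<in> {x1..0} - {0}" for x
    using that profile_eq[of x] diffusion_pos by (simp add: field_simps)
  ultimately show ?thesis
    by (intro has_integral_spike_finite[of "{0}" _ "\<lambda>x. LINT y:{..0}|lborel. J (x - y) * p y"
          "\<lambda>x. (1/d) * (d * p x - cc * p' x - f (p x))"]) auto
qed


text \<open>\<open>p\<close> is only controlled on \<open>{..0}\<close>; its constant extension to the right is continuous on \<open>\<real>\<close>.\<close>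

definition extended_profile :: "real \<Rightarrow> real" where
  "extended_profile y = p (min y 0)"

lemma extended_profile_measurable [measurable]: "extended_profile \<in> borel_measurable borel"
proof -
  have "continuous_on UNIV extended_profile" unfolding extended_profile_def
    by (rule continuous_on_compose2[OF profile_cont]) (auto intro: continuous_intros)
  then show ?thesis by (simp add: borel_measurable_continuous_onI)
qed

lemma extended_profile_nonpos: "y \<le> 0 \<Longrightarrow> extended_profile y = p y"
  by (simp add: extended_profile_def)

lemma extended_profile_nonneg: "0 \<le> extended_profile y"
  using profile_nonneg by (simp add: extended_profile_def)

lemma extended_profile_noninc: "x \<le> y \<Longrightarrow> y \<le> 0 \<Longrightarrow> extended_profile y \<le> extended_profile x"
  using profile_noninc by (simp add: extended_profile_def)

lemma flux_extended_profile: "flux J extended_profile = flux J p"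
  unfolding flux_def by (intro nn_integral_cong) (simp add: extended_profile_nonpos indicator_def)

lemma convolution_integral:
  assumes "x1 \<le> 0"
  defines "X \<equiv> integral {x1..0} p + (cc * p x1 - integral {x1..0} (\<lambda>x. f (p x))) / d"
  shows "0 \<le> X"
    and "(\<integral>\<^sup>+x. \<integral>\<^sup>+y. ennreal (indicator {..0} y * (indicator {x1..0} x * J (x - y) * extended_profile y))
           \<partial>lborel \<partial>lborel) = ennreal X"
proof -
  have X_int: "((\<lambda>x. LINT y:{..0}|lborel. J (x - y) * p y) has_integral X) {x1..0}"
    unfolding X_def using integrated_equation assms(1) by simp
  show "0 \<le> X" using has_integral_nonneg[OF X_int] convolution_nonneg_nn_integral(1) by blast
  have "(\<integral>\<^sup>+y. ennreal (indicator {..0} y * (indicator {x1..0} x * J (x - y) * extended_profile y)) \<partial>lborel)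
      = ennreal (LINT y:{..0}|lborel. J (x - y) * p y) * indicator {x1..0} x" for x
    unfolding convolution_nonneg_nn_integral(2)
    by (cases "x \<in> {x1..0}") (auto simp: extended_profile_nonpos indicator_def intro!: nn_integral_cong)
  then have "(\<integral>\<^sup>+x. \<integral>\<^sup>+y. ennreal (indicator {..0} y * (indicator {x1..0} x * J (x - y) * extended_profile y))
          \<partial>lborel \<partial>lborel)
      = (\<integral>\<^sup>+x. ennreal (LINT y:{..0}|lborel. J (x - y) * p y) * indicator {x1..0} x \<partial>lborel)"
    by simp
  also have "\<dots> = ennreal X"
    by (rule nn_integral_has_integral_lebesgue'[OF _ X_int]) (rule convolution_nonneg_nn_integral(1))
  finally show "(\<integral>\<^sup>+x. \<integral>\<^sup>+y. ennreal (indicator {..0} y * (indicator {x1..0} x * J (x - y) * extended_profile y))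
           \<partial>lborel \<partial>lborel) = ennreal X" .
qed

lemma mass_integral:
  "(\<integral>\<^sup>+x. \<integral>\<^sup>+y. ennreal (indicator {x1..0} x * J (x - y) * extended_profile x) \<partial>lborel \<partial>lborel)
     = ennreal (integral {x1..0} p)"
proof -
  have "(\<integral>\<^sup>+x. \<integral>\<^sup>+y. ennreal (indicator {x1..0} x * J (x - y) * extended_profile x) \<partial>lborel \<partial>lborel)
      = (\<integral>\<^sup>+x. ennreal (extended_profile x) * indicator {x1..0} x \<partial>lborel)"
    by (rule nn_integral_kernel_mass)
       (use kernel_nonneg kernel_integrable kernel_mass extended_profile_nonneg in auto)
  also have "\<dots> = (\<integral>\<^sup>+x. ennreal (p x) * indicator {x1..0} x \<partial>lborel)"
    by (intro nn_integral_cong) (simp add: extended_profile_nonpos indicator_def)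
  also have "\<dots> = ennreal (integral {x1..0} p)"
    using profile_integrable[of 0 x1] profile_nonneg by (intro nn_integral_has_integral_lebesgue') auto
  finally show ?thesis .
qed

lemma flux_balance:
  assumes x1: "x1 < 0" and R: "0 \<le> R" and M: "flux J p \<le> ennreal M" "0 \<le> M"
  shows "ennreal (d * (p (x1 - R) - p x1)) * interaction J {x1..0} {..<x1 - R}
           + ennreal (integral {x1..0} (\<lambda>x. f (p x)))
         \<le> ennreal (cc * p x1 + d * M)"
proof -
  define Ip where "Ip = integral {x1..0} p"
  define If where "If = integral {x1..0} (\<lambda>x. f (p x))"
  define X where "X = Ip + (cc * p x1 - If) / d"
  define \<kappa> where "\<kappa> = p (x1 - R) - p x1"
  have \<kappa>: "0 \<le> \<kappa>" using profile_noninc[of "x1 - R" x1] x1 R by (simp add: \<kappa>_def)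
  have X: "0 \<le> X" using convolution_integral(1)[of x1] x1 by (simp add: X_def Ip_def If_def)
  have "extended_profile (x1 - R) - extended_profile x1 = \<kappa>"
    using x1 R by (simp add: extended_profile_nonpos \<kappa>_def)
  then have "ennreal Ip + ennreal \<kappa> * interaction J {x1..0} {..<x1 - R} \<le> ennreal X + flux J p"
    using kernel_exchange[OF kernel_measurable extended_profile_measurable kernel_nonneg kernel_even
        extended_profile_nonneg extended_profile_noninc x1 R]
      convolution_integral(2)[of x1] mass_integral[of x1] x1
    by (simp add: flux_extended_profile X_def Ip_def If_def)
  also have "\<dots> \<le> ennreal (X + M)" using M X by (simp add: ennreal_plus add_left_mono)
  finally have balance: "ennreal Ip + ennreal \<kappa> * interaction J {x1..0} {..<x1 - R} \<le> ennreal (X + M)" .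
  have "ennreal \<kappa> * interaction J {x1..0} {..<x1 - R} \<le> ennreal (X + M)"
    using balance by (rule order_trans[rotated]) (intro add_increasing order_refl zero_le)
  then obtain e where e: "ennreal \<kappa> * interaction J {x1..0} {..<x1 - R} = ennreal e" "0 \<le> e"
    using neq_top_trans[OF ennreal_neq_top] by (cases rule: ennreal_cases) auto
  have "0 \<le> Ip"
    unfolding Ip_def by (rule integral_nonneg[OF profile_integrable]) (auto intro: profile_nonneg)
  then have "ennreal (Ip + e) \<le> ennreal (X + M)" using balance e by (simp add: ennreal_plus)
  then have "Ip + e \<le> X + M" using X M by (simp del: ennreal_plus)
  moreover have If: "0 \<le> If"
    unfolding If_def using reaction_integrable
    by (rule integral_nonneg) (use profile_nonneg profile_le_1 reaction_nonneg in auto)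
  ultimately have "d * e + If \<le> cc * p x1 + d * M"
    using diffusion_pos by (simp add: X_def field_simps)
  moreover have "ennreal (d * \<kappa>) * interaction J {x1..0} {..<x1 - R} = ennreal (d * e)"
    using diffusion_pos \<kappa> e by (simp add: ennreal_mult mult.assoc)
  ultimately show ?thesis
    using diffusion_pos e If by (simp add: If_def \<kappa>_def ennreal_plus[symmetric] ennreal_leI del: ennreal_plus)
qed

lemma profile_integral_bound:
  assumes f_lin: "\<And>u. 0 \<le> u \<Longrightarrow> u \<le> 1/2 \<Longrightarrow> a * u \<le> f u"
    and x: "x < 0" "p x \<le> 1/2" and M: "flux J p \<le> ennreal M" "0 \<le> M"
  shows "a * integral {x..0} p \<le> cc * p x + d * M"
proof -
  have "ennreal (integral {x..0} (\<lambda>y. f (p y))) \<le> ennreal (cc * p x + d * M)"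
    using flux_balance[OF x(1) order_refl M] by (rule order_trans[rotated]) (intro add_increasing order_refl zero_le)
  moreover have "0 \<le> cc * p x + d * M"
    using speed_nonneg profile_nonneg[of x] x diffusion_pos M by simp
  ultimately have "integral {x..0} (\<lambda>y. f (p y)) \<le> cc * p x + d * M"
    by (simp del: ennreal_plus)
  moreover have "integral {x..0} (\<lambda>y. a * p y) \<le> integral {x..0} (\<lambda>y. f (p y))"
  proof (rule integral_le)
    show "(\<lambda>y. a * p y) integrable_on {x..0}" using integrable_cmul[OF profile_integrable[of 0 x], of a] by simp
    fix y assume "y \<in> {x..0}"
    then show "a * p y \<le> f (p y)" using f_lin profile_nonneg profile_noninc[of x y] x by auto
  qed (rule reaction_integrable)
  ultimately show ?thesis by simp
qed

lemma profile_attains: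
  assumes "p (-1) \<le> v" "v < 1"
  obtains x1 where "x1 \<le> -1" "p x1 = v"
proof -
  obtain N where N: "\<And>y. y \<le> N \<Longrightarrow> v < p y"
    using order_tendstoD(1)[OF profile_minf \<open>v < 1\<close>] by (auto simp: eventually_at_bot_linorder)
  define t where "t = min N (-1)"
  have "continuous_on {t..-1} p" using profile_cont by (rule continuous_on_subset) (auto simp: t_def)
  moreover have "t \<le> -1" "v \<le> p t" using N[of t] by (simp_all add: t_def)
  ultimately have "\<exists>x\<ge>t. x \<le> -1 \<and> p x = v" using IVT2'[of p "-1" v t] assms(1) by blast
  then show ?thesis using that by blast
qed

lemma profile_at_minus_1_le:
  assumes "flux J p \<le> ennreal M" "0 \<le> M" "M \<le> \<delta> * \<tau>" "tail J 2 = ennreal \<tau>" "0 < \<tau>"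
  shows "p (-1) \<le> \<delta>"
proof -
  have "ennreal (p (-1) * \<tau>) \<le> ennreal M"
    using tail_le_flux[of J p, OF kernel_measurable kernel_nonneg kernel_even profile_nonneg profile_noninc]
      assms(1,4,5) profile_nonneg[of "-1"] by (simp add: ennreal_mult)
  then have "p (-1) * \<tau> \<le> \<delta> * \<tau>" using assms(2,3) by simp
  then show ?thesis using assms(5) by simp
qed

lemma tail_bound_of_escape:
  assumes x1: "x1 \<le> -1" and R: "0 \<le> R" and \<kappa>: "1/8 \<le> p (x1 - R) - p x1"
    and M: "flux J p \<le> ennreal M" "0 \<le> M"
  shows "tail J (R + 1) \<le> ennreal (8 * (cc * p x1 + d * M) / d)"
proof -
  have "tail J (R + 1) \<le> interaction J {x1..0} {..<x1 - R}"
    using tail_le_interaction[OF kernel_measurable kernel_nonneg, of x1 0 "x1 - R"] x1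
    by (simp add: add.commute)
  then have "ennreal (d * (p (x1 - R) - p x1)) * tail J (R + 1)
      \<le> ennreal (d * (p (x1 - R) - p x1)) * interaction J {x1..0} {..<x1 - R}"
    by (rule mult_left_mono) simp
  also have "\<dots> \<le> ennreal (cc * p x1 + d * M)"
    using flux_balance[OF _ R M] x1 by (intro order_trans[OF _ flux_balance[OF _ R M]] add_increasing2) auto
  finally have bound: "ennreal (d * (p (x1 - R) - p x1)) * tail J (R + 1) \<le> ennreal (cc * p x1 + d * M)" .
  obtain T where T: "tail J (R + 1) = ennreal T" "0 \<le> T"
    using tail_le_1[OF kernel_nonneg kernel_integrable kernel_mass, of "R + 1"]
    by (cases "tail J (R + 1)" rule: ennreal_cases) (auto simp: top_unique)
  have "d * (1/8) * T \<le> d * (p (x1 - R) - p x1) * T"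
    using \<kappa> T(2) diffusion_pos by (intro mult_right_mono mult_left_mono) auto
  also have "\<dots> \<le> cc * p x1 + d * M"
  proof -
    have "0 \<le> cc * p x1 + d * M" using speed_nonneg profile_nonneg[of x1] diffusion_pos M x1 by simp
    moreover have "ennreal (d * (p (x1 - R) - p x1) * T) \<le> ennreal (cc * p x1 + d * M)"
      using bound T \<kappa> diffusion_pos by (simp add: ennreal_mult del: ennreal_plus)
    ultimately show ?thesis by (simp del: ennreal_plus)
  qed
  finally show ?thesis using T diffusion_pos by (simp add: field_simps ennreal_leI)
qed

lemma tail_bound_if_flux_small:
  fixes a C M :: real and k :: nat
  assumes a: "0 < a" "\<And>u. 0 \<le> u \<Longrightarrow> u \<le> 1/2 \<Longrightarrow> a * u \<le> f u"
    and C: "0 < C" "cc \<le> C" and k: "3 \<le> k"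
    and M: "flux J p \<le> ennreal M" "0 \<le> M"
    and tail2: "tail J 2 \<noteq> 0"
    and small: "M \<le> (1/2)^k * min (C / (2 * d)) (enn2real (tail J 2))"
  shows "tail J (real k * (C / a) + 1) \<le> ennreal (12 * C / d * (1/2)^k)"
proof -
  define \<delta> where "\<delta> = (1/2::real)^k"
  have \<delta>: "0 < \<delta>" "\<delta> \<le> 1/8"
    using power_decreasing[OF k, of "1/2::real"] by (simp_all add: \<delta>_def power_numeral_reduce)
  obtain \<tau> where \<tau>: "tail J 2 = ennreal \<tau>" "0 \<le> \<tau>"
    using tail_le_1[OF kernel_nonneg kernel_integrable kernel_mass, of 2]
    by (cases "tail J 2" rule: ennreal_cases) (auto simp: top_unique)
  with tail2 have "0 < \<tau>" by auto
  have "\<delta> * min (C / (2 * d)) \<tau> \<le> \<delta> * (C / (2 * d))" "\<delta> * min (C / (2 * d)) \<tau> \<le> \<delta> * \<tau>"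
    using \<delta>(1) by (intro mult_left_mono; simp)+
  moreover have "M \<le> \<delta> * min (C / (2 * d)) \<tau>" using small \<tau> by (simp add: \<delta>_def)
  ultimately have "M \<le> \<delta> * (C / (2 * d))" and M\<tau>: "M \<le> \<delta> * \<tau>" by linarith+
  then have dM: "d * M \<le> C * \<delta> / 2" using diffusion_pos by (simp add: field_simps)
  have "p (-1) \<le> \<delta>" by (rule profile_at_minus_1_le[OF M M\<tau> \<tau>(1) \<open>0 < \<tau>\<close>])
  then obtain x1 where x1: "x1 \<le> -1" "p x1 = \<delta>" using \<delta> by (elim profile_attains) auto
  define R where "R = real k * (C / a)"
  have "1/4 \<le> p (x1 - R)"
    unfolding R_def
  proof (rule integral_doubling_escape[OF a(1) C(1) profile_nonneg profile_noninc profile_cont])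
    fix x assume "x < 0" "p x \<le> 1/2"
    then show "a * integral {x..0} p \<le> C * p x + d * M"
      using profile_integral_bound[OF a(2) _ _ M] C(2) mult_right_mono[OF C(2) profile_nonneg[of x]]
      by fastforce
  qed (use x1 k dM in \<open>auto simp: \<delta>_def\<close>)
  then have "tail J (R + 1) \<le> ennreal (8 * (cc * \<delta> + d * M) / d)"
    using tail_bound_of_escape[OF x1(1) _ _ M] x1 \<delta> a C by (simp add: R_def)
  also have "\<dots> \<le> ennreal (12 * C * \<delta> / d)"
  proof -
    have "8 * (cc * \<delta> + d * M) \<le> 12 * C * \<delta>"
      using mult_right_mono[OF C(2) less_imp_le[OF \<delta>(1)]] dM by (simp add: algebra_simps)
    then show ?thesis using divide_right_mono[of _ _ d] diffusion_pos by (intro ennreal_leI) simp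
  qed
  finally show ?thesis by (simp add: R_def \<delta>_def)
qed

end

lemma linear_lower_bound_of_antitone_ratio:
  fixes f :: "real \<Rightarrow> real" and u v :: real
  assumes ratio: "\<And>u v. 0 < u \<Longrightarrow> u \<le> v \<Longrightarrow> f v / v \<le> f u / u" and "f 0 = 0"
    and "0 \<le> u" "u \<le> v"
  shows "f v / v * u \<le> f u"
proof (cases "u = 0")
  case True
  then show ?thesis using \<open>f 0 = 0\<close> by simp
next
  case False
  then have "0 < u" using \<open>0 \<le> u\<close> by simp
  then show ?thesis using ratio[OF \<open>0 < u\<close> \<open>u \<le> v\<close>] by (simp add: field_simps)
qed

lemma not_filterlim_at_top_frequently_bounded:
  fixes g :: "real \<Rightarrow> real"
  assumes "\<not> filterlim g at_top at_top"
  shows "\<exists>C>0. \<forall>N. \<exists>x\<ge>N. 0 < x \<and> g x < C"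
proof -
  obtain Z where "\<not> eventually (\<lambda>x. Z \<le> g x) at_top"
    using assms unfolding filterlim_at_top by blast
  have "\<exists>x\<ge>N. 0 < x \<and> g x < max Z 1" for N
  proof -
    from \<open>\<not> eventually (\<lambda>x. Z \<le> g x) at_top\<close> obtain x where "max N 1 \<le> x" "g x < Z"
      unfolding eventually_at_top_linorder by (meson not_le)
    then show ?thesis by (intro exI[of _ x]) auto
  qed
  then show ?thesis by (intro exI[of _ "max Z 1"]) auto
qed

lemma tail_geometric_if_speed_bounded:
  fixes J f :: "real \<Rightarrow> real" and d a C :: real and c :: "real \<Rightarrow> real"
    and \<phi> \<phi>' :: "real \<Rightarrow> real \<Rightarrow> real"
  assumes wave: "\<And>\<mu>. 0 < \<mu> \<Longrightarrow> semi_wave J d (c \<mu>) f (\<phi> \<mu>) (\<phi>' \<mu>)"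
    and flux: "\<And>\<mu>. 0 < \<mu> \<Longrightarrow> flux J (\<phi> \<mu>) = ennreal (c \<mu> / \<mu>)"
    and a: "0 < a" "\<And>u. 0 \<le> u \<Longrightarrow> u \<le> 1/2 \<Longrightarrow> a * u \<le> f u"
    and C: "0 < C" and slow: "\<And>N. \<exists>\<mu>\<ge>N. 0 < \<mu> \<and> c \<mu> < C"
  shows "\<exists>K\<ge>0. \<forall>k. tail J (real k * (C / a) + 1) \<le> ennreal (K * (1/2)^k)"
proof -
  \<comment> \<open>Any single wave gives access to the hypotheses on \<open>J\<close> and \<open>d\<close>.\<close>
  interpret semi_wave J d "c 1" f "\<phi> 1" "\<phi>' 1" using wave by simp
  have "tail J (real k * (C / a) + 1) \<le> ennreal (12 * C / d * (1/2)^k)" if "tail J 2 \<noteq> 0" "3 \<le> k" for k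
  proof -
    define m where "m = (1/2)^k * min (C / (2 * d)) (enn2real (tail J 2))"
    have "0 < enn2real (tail J 2)"
      using tail_le_1[OF kernel_nonneg kernel_integrable kernel_mass, of 2] that(1)
      by (simp add: enn2real_positive_iff zero_less_iff_neq_zero le_less_trans[OF _ ennreal_one_less_top])
    then have "0 < m" using C diffusion_pos by (simp add: m_def)
    then obtain \<mu> where \<mu>: "C / m \<le> \<mu>" "0 < \<mu>" "c \<mu> < C" using slow by blast
    then have "c \<mu> / \<mu> \<le> m" using \<open>0 < m\<close> by (simp add: field_simps)
    moreover have "0 \<le> c \<mu> / \<mu>" using semi_wave.speed_nonneg[OF wave[OF \<mu>(2)]] \<mu>(2) by simp
    ultimately show ?thesis
      using semi_wave.tail_bound_if_flux_small[OF wave[OF \<mu>(2)] a C _ that(2) _ _ that(1)] flux[OF \<mu>(2)] \<mu>(3)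
      by (simp add: m_def)
  qed
  moreover have "0 < C / a" using a(1) C by simp
  ultimately show ?thesis by (intro tail_geometric_bound[of J, OF kernel_nonneg kernel_integrable kernel_mass])
qed

theorem theorem5p2:
  fixes d :: real and J :: "real \<Rightarrow> real"
    and f f' :: "real \<Rightarrow> real"
    and c :: "real \<Rightarrow> real" and \<phi> \<phi>' :: "real \<Rightarrow> real \<Rightarrow> real"
  assumes d_pos: "d > 0"
    and J_cont: "continuous_on UNIV J"
    and J_bdd: "bounded (range J)"
    and J_nonneg: "\<And>x. J x \<ge> 0"
    and J0: "J 0 > 0"
    and J_int: "integrable lborel J"
    and J_mass: "integral\<^sup>L lborel J = 1"
    and J_even: "\<And>x. J (- x) = J x"
    and J_double: "(\<integral>\<^sup>+ x. indicator {..0} x *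
                      (\<integral>\<^sup>+ y. indicator {0..} y * ennreal (J (x - y)) \<partial>lborel) \<partial>lborel) < \<infinity>"
    and J_no_exp: "\<not> (\<exists>lam>0. (\<integral>\<^sup>+ x. ennreal (J x * exp (lam * x)) \<partial>lborel) < \<infinity>)"
    and f_deriv: "\<And>u. u \<ge> 0 \<Longrightarrow> (f has_real_derivative f' u) (at u within {0..})"
    and f'_cont: "continuous_on {0..} f'"
    and f0: "f 0 = 0" and f1: "f 1 = 0"
    and f_pos: "\<And>u. 0 < u \<Longrightarrow> u < 1 \<Longrightarrow> f u > 0"
    and f'0: "f' 0 > 0" and f'1: "f' 1 < 0"
    and f_KPP: "\<And>u v. 0 < u \<Longrightarrow> u \<le> v \<Longrightarrow> f v / v \<le> f u / u"
    and c_pos: "\<And>\<mu>. \<mu> > 0 \<Longrightarrow> c \<mu> > 0"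
    and \<phi>_deriv: "\<And>\<mu> x. \<mu> > 0 \<Longrightarrow> x \<le> 0 \<Longrightarrow>
                     (\<phi> \<mu> has_real_derivative \<phi>' \<mu> x) (at x within {..0})"
    and \<phi>'_cont: "\<And>\<mu>. \<mu> > 0 \<Longrightarrow> continuous_on {..0} (\<phi>' \<mu>)"
    and \<phi>_nonneg: "\<And>\<mu> x. \<mu> > 0 \<Longrightarrow> x \<le> 0 \<Longrightarrow> \<phi> \<mu> x \<ge> 0"
    and \<phi>_noninc: "\<And>\<mu> x y. \<mu> > 0 \<Longrightarrow> x \<le> y \<Longrightarrow> y \<le> 0 \<Longrightarrow> \<phi> \<mu> y \<le> \<phi> \<mu> x"
    and \<phi>_eq: "\<And>\<mu> x. \<mu> > 0 \<Longrightarrow> x < 0 \<Longrightarrow>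
                 d * (LINT y:{..0}|lborel. J (x - y) * \<phi> \<mu> y) - d * \<phi> \<mu> x
                 + c \<mu> * \<phi>' \<mu> x + f (\<phi> \<mu> x) = 0"
    and \<phi>_minf: "\<And>\<mu>. \<mu> > 0 \<Longrightarrow> (\<phi> \<mu> \<longlongrightarrow> 1) at_bot"
    and \<phi>_zero: "\<And>\<mu>. \<mu> > 0 \<Longrightarrow> \<phi> \<mu> 0 = 0"
    and c_free_boundary: "\<And>\<mu>. \<mu> > 0 \<Longrightarrow>
          c \<mu> = \<mu> * (LINT x:{..0}|lborel. (LINT y:{0..}|lborel. J (x - y) * \<phi> \<mu> x))"
  shows "filterlim c at_top at_top"
proof (rule ccontr)
  assume "\<not> filterlim c at_top at_top"
  then obtain C where C: "0 < C" and slow: "\<And>N. \<exists>\<mu>\<ge>N. 0 < \<mu> \<and> c \<mu> < C"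
    using not_filterlim_at_top_frequently_bounded by blast
  define a where "a = 2 * f (1/2)"
  have a: "0 < a" "\<And>u. 0 \<le> u \<Longrightarrow> u \<le> 1/2 \<Longrightarrow> a * u \<le> f u"
    using f_pos[of "1/2"] linear_lower_bound_of_antitone_ratio[OF f_KPP f0, of _ "1/2"]
    by (auto simp: a_def mult_ac)
  have wave: "semi_wave J d (c \<mu>) f (\<phi> \<mu>) (\<phi>' \<mu>)" if "0 < \<mu>" for \<mu>
  proof
    show "continuous_on {0..} f"
      unfolding continuous_on_eq_continuous_within using f_deriv DERIV_continuous by fastforce
    show "0 \<le> f u" if "0 \<le> u" "u \<le> 1" for u
      using that f0 f1 f_pos[of u] by (cases "u = 0 \<or> u = 1") auto
  qed (use that d_pos J_cont J_nonneg J_int J_mass J_even c_pos[of \<mu>] \<phi>_deriv \<phi>_nonneg \<phi>_noninc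
         \<phi>_eq \<phi>_minf \<phi>_zero in auto)
  have flux: "flux J (\<phi> \<mu>) = ennreal (c \<mu> / \<mu>)" if "0 < \<mu>" for \<mu>
    using flux_eq_integral[of J "\<phi> \<mu>", OF J_int J_nonneg \<phi>_nonneg[OF that]] c_free_boundary[OF that]
      c_pos[OF that] that
    by (simp add: zero_less_mult_iff)
  obtain K where "0 \<le> K" "\<And>k. tail J (real k * (C / a) + 1) \<le> ennreal (K * (1/2)^k)"
    using tail_geometric_if_speed_bounded[OF wave flux a C slow] by blast
  moreover have "J \<in> borel_measurable borel" using J_cont by (rule borel_measurable_continuous_onI)
  ultimately show False
    using exp_moment_finite_if_tail_geometric[of J "C / a" K] J_nonneg J_int J_mass a(1) C J_no_exp by auto
qed

end
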